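(* Let $d\ge1$, let $\ell_1>\ell_2>\dots>\ell_d\ge1$ and $r_1,\dots,r_d\ge1$ be integers, and let $n_1,\dots,n_d$ be positive integers with $n_i\ge 2r_i\ell_i$. For each $i$ fix a gap sequence $\vec g(i)=(g_1(i),\dots,g_{r_i}(i))$ of integers with $g_j(i)\ge2\ell_i$ and $\sum_j g_j(i)=n_i$. Let $P_d(\vec n,\vec\ell,\vec r)$ be the number of tuples $(p_1,\dots,p_d)$ with $p_i\in\mathbb Z/n_i\mathbb Z$ that are valid, meaning: there are no indices $i<j$, $a\in\{1,\dots,r_i\}$, $b\in\{1,\dots,r_j\}$ such that $e_a(i)\in W_i(\ell_j)$ and $e_b(j)\in W_j(\ell_j)$. Then this number does not depend on the choice of gap sequences, and it satisfies $P_0=1$, $P_1(n_1,\ell_1,r_1)=n_1$, and for $d\ge1$ $$P_d(\vec n,\vec\ell,\vec r)=\prod_{i=1}^d n_i-4\sum_{1\le i<j\le d} r_ir_j\ell_j^2\, P_{i-1}(\vec n(i),\vec\ell(i),\vec r(i))\prod_{i<k<j}(n_k-2r_k\ell_k)\prod_{k>j}n_k,$$ where $\vec n(i)=(n_1-2r_1\ell_i,\dots,n_{i-1}-2r_{i-1}\ell_i)$, $\vec\ell(i)=(\ell_1-\ell_i,\dots,\ell_{i-1}-\ell_i)$, $\vec r(i)=(r_1,\dots,r_{i-1})$. In particular, if $n_i=n-\ell_i-2\sum_{j\ne i}r_j\min(\ell_i,\ell_j)$ for each $i$, then $P_d$ is a monic polynomial in $n$ of degree $d$ (with $P_1=n-\ell_1$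 when $d=1$).
   Context: Notation: for track $i$ (a cycle $\mathbb Z/n_i\mathbb Z$ whose elements are represented by $1,\dots,n_i$, with $n_i$ called the boundary), given position $p_i$ and gap sequence $\vec g(i)$, the $a$-th run on track $i$ occupies the $\ell_i$ consecutive positions starting at $p_i+g_1(i)+\dots+g_{a-1}(i)$, and its end is $e_a(i)=p_i+g_1(i)+\dots+g_{a-1}(i)+\ell_i-1 \pmod{n_i}$. For $m\le n_i/2$, the window $W_i(m)\subseteq\mathbb Z/n_i\mathbb Z$ is the set of $2m$ residues $\{n_i-m+1,\dots,n_i,1,2,\dots,m\}$ (the $2m$ positions nearest the boundary). Empty products equal $1$. *)

theory Defs
  imports Main "HOL-Library.FuncSet" "HOL-Computational_Algebra.Polynomial"
begin

text \<open>Tracks are indexed by 1..d. Parameters: n (boundaries), l (run lengths),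
  r (number of runs), g i j (j-th gap on track i, j = 1..r i), p i (position on track i,
  represented by an integer in 1..n i).\<close>

definition window :: "int \<Rightarrow> int \<Rightarrow> int set" where
  "window n m = {n - m + 1 .. n} \<union> {1 .. m}"

definition in_window :: "int \<Rightarrow> int \<Rightarrow> int \<Rightarrow> bool" where
  "in_window n m x \<longleftrightarrow> (\<exists>w \<in> window n m. x mod n = w mod n)"

text \<open>End of the a-th run on track i (as an integer; it is read modulo n i).\<close>
definition run_end ::
  "(nat \<Rightarrow> nat) \<Rightarrow> (nat \<Rightarrow> nat \<Rightarrow> nat) \<Rightarrow> (nat \<Rightarrow> int) \<Rightarrow> nat \<Rightarrow> nat \<Rightarrow> int" where
  "run_end l g p i a = p i + (\<Sum>c = 1..<a. int (g i c)) + int (l i) - 1"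

definition valid ::
  "nat \<Rightarrow> (nat \<Rightarrow> nat) \<Rightarrow> (nat \<Rightarrow> nat) \<Rightarrow> (nat \<Rightarrow> nat) \<Rightarrow> (nat \<Rightarrow> nat \<Rightarrow> nat)
    \<Rightarrow> (nat \<Rightarrow> int) \<Rightarrow> bool" where
  "valid d n l r g p \<longleftrightarrow>
     \<not> (\<exists>i j a b. 1 \<le> i \<and> i < j \<and> j \<le> d \<and> a \<in> {1..r i} \<and> b \<in> {1..r j} \<and>
          in_window (int (n i)) (int (l j)) (run_end l g p i a) \<and>
          in_window (int (n j)) (int (l j)) (run_end l g p j b))"

definition count_valid ::
  "nat \<Rightarrow> (nat \<Rightarrow> nat) \<Rightarrow> (nat \<Rightarrow> nat) \<Rightarrow> (nat \<Rightarrow> nat) \<Rightarrow> (nat \<Rightarrow> nat \<Rightarrow> nat) \<Rightarrow> nat" where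
  "count_valid d n l r g =
     card {p \<in> Pi\<^sub>E {1..d} (\<lambda>i. {1 .. int (n i)}). valid d n l r g p}"

definition params_ok :: "nat \<Rightarrow> (nat \<Rightarrow> nat) \<Rightarrow> (nat \<Rightarrow> nat) \<Rightarrow> (nat \<Rightarrow> nat) \<Rightarrow> bool" where
  "params_ok d n l r \<longleftrightarrow>
     (\<forall>i \<in> {1..d}. 1 \<le> l i \<and> 1 \<le> r i \<and> 0 < n i \<and> 2 * r i * l i \<le> n i) \<and>
     (\<forall>i j. 1 \<le> i \<longrightarrow> i < j \<longrightarrow> j \<le> d \<longrightarrow> l j < l i)"

definition gaps_ok ::
  "nat \<Rightarrow> (nat \<Rightarrow> nat) \<Rightarrow> (nat \<Rightarrow> nat) \<Rightarrow> (nat \<Rightarrow> nat) \<Rightarrow> (nat \<Rightarrow> nat \<Rightarrow> nat) \<Rightarrow> bool" where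
  "gaps_ok d n l r g \<longleftrightarrow>
     (\<forall>i \<in> {1..d}. (\<forall>j \<in> {1..r i}. 2 * l i \<le> g i j) \<and> (\<Sum>j = 1..r i. g i j) = n i)"

definition Pcount :: "nat \<Rightarrow> (nat \<Rightarrow> nat) \<Rightarrow> (nat \<Rightarrow> nat) \<Rightarrow> (nat \<Rightarrow> nat) \<Rightarrow> nat" where
  "Pcount d n l r = count_valid d n l r (SOME g. gaps_ok d n l r g)"

end

theory Submission
  imports Defs
begin

text \<open>
Record for each track i the depth of its position: the least m such that some run end lies in
the window W_i(m). Consecutive run ends on track i are at least 2 l_i apart, so for every
m <= l_i exactly 2 r_i m positions have depth at most m; and a tuple is valid iff no two tracks
i < j both have depth at most l_j. Only these two facts enter the count, which therefore does
not depend on the gaps.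

Let V_e count the valid e-tuples, E_e(m) those with some depth at most m, and F_e(m) those with
all depths above m. Adding track e + 1 gives
  V_(e+1) = n_(e+1) V_e - 2 r_(e+1) l_(e+1) E_e(l_(e+1)),
  E_(e+1)(m) = 2 r_(e+1) m F_e(l_(e+1)) + (n_(e+1) - 2 r_(e+1) l_(e+1)) E_e(m)   for m <= l_(e+1),
and subtracting l_i from all depths identifies F_(i-1)(l_i) with the count V_(i-1) for the
parameters n(i), l(i), r(i). Unrolling E and inducting on d yields the recursion. Put
n_i = n + c_i and it becomes a recursion of polynomials in n, in which the product of the n_i is
the only term of degree d.
\<close>

section \<open>The recursion formula\<close>

text \<open>Stated over any commutative ring, so that it can be evaluated both at the integers n_i and
  at the linear polynomials n + c_i.\<close>

function Pformula :: "nat \<Rightarrow> (nat \<Rightarrow> 'a::comm_ring_1) \<Rightarrow> (nat \<Rightarrow> nat) \<Rightarrow> (nat \<Rightarrow> nat) \<Rightarrow> 'a" where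
  "Pformula d N L r = (\<Prod>i = 1..d. N i) - 4 * (\<Sum>i = 1..d. \<Sum>j = i + 1..d.
     of_nat (r i) * of_nat (r j) * of_nat (L j) ^ 2
     * Pformula (i - 1) (\<lambda>k. N k - 2 * of_nat (r k) * of_nat (L i)) (\<lambda>k. L k - L i) r
     * (\<Prod>k \<in> {i<..<j}. N k - 2 * of_nat (r k) * of_nat (L k))
     * (\<Prod>k \<in> {j<..d}. N k))"
  by pat_completeness auto
termination by (relation "measure (\<lambda>(d, _). d)") auto

declare Pformula.simps [simp del]

lemma Pformula_0 [simp]: "Pformula 0 N L r = 1"
  by (subst Pformula.simps) simp

lemma Pformula_1 [simp]: "Pformula 1 N L r = N 1"
  by (subst Pformula.simps) simp

lemma Pformula_cong:
  assumes "\<And>k. k \<in> {1..d} \<Longrightarrow> N k = N' k"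
  shows "Pformula d N L r = Pformula d N' L r"
  using assms
proof (induction d arbitrary: N N' L rule: less_induct)
  case (less d)
  have IH: "Pformula (i - 1) (\<lambda>k. N k - 2 * of_nat (r k) * of_nat (L i)) (\<lambda>k. L k - L i) r
      = Pformula (i - 1) (\<lambda>k. N' k - 2 * of_nat (r k) * of_nat (L i)) (\<lambda>k. L k - L i) r"
    if "i \<in> {1..d}" for i
    using that by (intro less.IH) (auto simp: less.prems)
  show ?case
    apply (subst (1 2) Pformula.simps)
    apply (intro arg_cong2[where f="(-)"] arg_cong2[where f="(*)"] refl prod.cong sum.cong)
     apply (auto simp only: IH)
    apply (auto simp: less.prems)
    done
qed

lemma poly_Pformula: "poly (Pformula d N L r) x = Pformula d (\<lambda>k. poly (N k) x) L r"
proof (induction d arbitrary: N L rule: less_induct)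
  case (less d)
  have IH: "poly (Pformula (i - 1) (\<lambda>k. N k - 2 * of_nat (r k) * of_nat (L i)) (\<lambda>k. L k - L i) r) x
      = Pformula (i - 1) (\<lambda>k. poly (N k) x - 2 * of_nat (r k) * of_nat (L i)) (\<lambda>k. L k - L i) r"
    if "i \<in> {1..d}" for i
  proof -
    from that have "i - 1 < d" by auto
    from less.IH[OF this] show ?thesis by simp
  qed
  show ?case
    apply (subst (1 2) Pformula.simps)
    apply (simp only: poly_diff poly_mult poly_sum poly_prod)
    apply (intro arg_cong2[where f="(-)"] arg_cong2[where f="(*)"] refl prod.cong sum.cong)
     apply (auto simp only: IH)
    apply simp_all
    done
qed

lemma Pformula_Suc:
  "Pformula (Suc e) N L r = N (Suc e) * Pformula e N L r
     - 4 * of_nat (r (Suc e)) * of_nat (L (Suc e)) ^ 2 * (\<Sum>i = 1..e. of_nat (r i)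
        * Pformula (i - 1) (\<lambda>k. N k - 2 * of_nat (r k) * of_nat (L i)) (\<lambda>k. L k - L i) r
        * (\<Prod>k \<in> {i<..e}. N k - 2 * of_nat (r k) * of_nat (L k)))"
proof -
  define T where "T i j = of_nat (r i) * of_nat (r j) * of_nat (L j) ^ 2
     * Pformula (i - 1) (\<lambda>k. N k - 2 * of_nat (r k) * of_nat (L i)) (\<lambda>k. L k - L i) r
     * (\<Prod>k \<in> {i<..<j}. N k - 2 * of_nat (r k) * of_nat (L k))" for i j
  have unfold: "Pformula d N L r
      = (\<Prod>i = 1..d. N i) - 4 * (\<Sum>i = 1..d. \<Sum>j = i + 1..d. T i j * (\<Prod>k \<in> {j<..d}. N k))" for d
    by (subst Pformula.simps) (simp add: T_def)
  have tail: "(\<Prod>k \<in> {j<..Suc e}. N k) = N (Suc e) * (\<Prod>k \<in> {j<..e}. N k)" if "j \<le> e" for j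
    using that by (simp add: prod.head_if mult.commute atLeastSucAtMost_greaterThanAtMost[symmetric])
  have inner: "(\<Sum>j = i + 1..Suc e. T i j * (\<Prod>k \<in> {j<..Suc e}. N k))
      = N (Suc e) * (\<Sum>j = i + 1..e. T i j * (\<Prod>k \<in> {j<..e}. N k)) + T i (Suc e)"
    if "i \<le> e" for i
  proof -
    have "{i + 1..Suc e} = insert (Suc e) {i + 1..e}" using that by auto
    then show ?thesis
      by (simp add: sum_distrib_left tail mult.left_commute add.commute)
  qed
  have outer: "(\<Sum>i = 1..Suc e. \<Sum>j = i + 1..Suc e. T i j * (\<Prod>k \<in> {j<..Suc e}. N k))
      = N (Suc e) * (\<Sum>i = 1..e. \<Sum>j = i + 1..e. T i j * (\<Prod>k \<in> {j<..e}. N k))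
        + (\<Sum>i = 1..e. T i (Suc e))" (is "?lhs = _")
  proof -
    have "?lhs = (\<Sum>i = 1..e. \<Sum>j = i + 1..Suc e. T i j * (\<Prod>k \<in> {j<..Suc e}. N k))"
      by (simp add: sum.nat_ivl_Suc')
    also have "\<dots> = (\<Sum>i = 1..e. N (Suc e) * (\<Sum>j = i + 1..e. T i j * (\<Prod>k \<in> {j<..e}. N k))
        + T i (Suc e))"
      by (intro sum.cong refl inner) simp
    finally show ?thesis
      by (simp add: sum.distrib sum_distrib_left)
  qed
  have last: "(\<Sum>i = 1..e. T i (Suc e)) = of_nat (r (Suc e)) * of_nat (L (Suc e)) ^ 2 * (\<Sum>i = 1..e.
      of_nat (r i) * Pformula (i - 1) (\<lambda>k. N k - 2 * of_nat (r k) * of_nat (L i)) (\<lambda>k. L k - L i) r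
        * (\<Prod>k \<in> {i<..e}. N k - 2 * of_nat (r k) * of_nat (L k)))"
  proof -
    have "{i<..<Suc e} = {i<..e}" for i
      by auto
    then show ?thesis
      by (simp add: T_def sum_distrib_left algebra_simps)
  qed
  show ?thesis
    unfolding unfold[of "Suc e"] unfold[of e] outer last
    by (simp add: prod.nat_ivl_Suc' algebra_simps)
qed

lemma degree_diff_eq_left:
  fixes p q :: "'a::ab_group_add poly"
  shows "degree q < degree p \<Longrightarrow> degree (p - q) = degree p"
  using degree_add_eq_left[of "- q" p] by simp

lemma lead_coeff_diff_left:
  fixes p q :: "'a::ab_group_add poly"
  shows "degree q < degree p \<Longrightarrow> lead_coeff (p - q) = lead_coeff p"
  using lead_coeff_add_le[of "- q" p] by simp

lemma degree_lead_coeff_prod_linear: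
  fixes f :: "'b \<Rightarrow> 'a::idom poly"
  assumes "\<And>x. x \<in> A \<Longrightarrow> degree (f x) = 1 \<and> lead_coeff (f x) = 1"
  shows "degree (prod f A) = card A \<and> lead_coeff (prod f A) = 1"
proof (cases "finite A")
  case True
  have "degree (prod f A) = (\<Sum>x \<in> A. degree (f x))"
    by (rule degree_prod_sum_eq) (use assms in fastforce)
  also have "\<dots> = card A"
    using assms by simp
  finally have "degree (prod f A) = card A" .
  moreover have "lead_coeff (prod f A) = (\<Prod>x \<in> A. lead_coeff (f x))"
    by (rule lead_coeff_prod)
  moreover have "\<dots> = 1"
    by (rule prod.neutral) (use assms in blast)
  ultimately show ?thesis
    by simp
qed simp

lemma Pformula_monic:
  fixes N :: "nat \<Rightarrow> 'a::idom poly"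
  assumes "\<And>k. k \<in> {1..d} \<Longrightarrow> degree (N k) = 1 \<and> lead_coeff (N k) = 1"
  shows "degree (Pformula d N L r) = d \<and> lead_coeff (Pformula d N L r) = 1"
  using assms
proof (induction d arbitrary: N L rule: less_induct)
  case (less d)
  have shift: "degree (N k - 2 * of_nat a * of_nat b) = 1 \<and> lead_coeff (N k - 2 * of_nat a * of_nat b) = 1"
    if "k \<in> {1..d}" for k a b
  proof -
    have "degree (2 * of_nat a * of_nat b :: 'a poly) = 0"
      by (metis degree_of_nat of_nat_mult of_nat_numeral)
    with less.prems[OF that] have "degree (2 * of_nat a * of_nat b :: 'a poly) < degree (N k)"
      by simp
    with less.prems[OF that] show ?thesis
      by (metis degree_diff_eq_left lead_coeff_diff_left)
  qed
  define T where "T i j = of_nat (r i) * of_nat (r j) * of_nat (L j) ^ 2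
     * Pformula (i - 1) (\<lambda>k. N k - 2 * of_nat (r k) * of_nat (L i)) (\<lambda>k. L k - L i) r
     * (\<Prod>k \<in> {i<..<j}. N k - 2 * of_nat (r k) * of_nat (L k))
     * (\<Prod>k \<in> {j<..d}. N k)" for i j
  define B where "B = (\<Sum>i = 1..d. \<Sum>j = i + 1..d. T i j)"
  have A: "degree (\<Prod>i = 1..d. N i) = d" "lead_coeff (\<Prod>i = 1..d. N i) = 1"
    using degree_lead_coeff_prod_linear[of "{1..d}" N, OF less.prems] by (simp, blast)
  have "degree (T i j) \<le> d - 2" if ij: "i \<in> {1..d}" "j \<in> {i + 1..d}" for i j
  proof -
    have "degree (of_nat (r i) * of_nat (r j) * of_nat (L j) ^ 2 :: 'a poly) = 0"
      by (metis degree_of_nat of_nat_mult of_nat_power)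
    moreover have "degree (Pformula (i - 1) (\<lambda>k. N k - 2 * of_nat (r k) * of_nat (L i)) (\<lambda>k. L k - L i) r) = i - 1"
      using ij by (intro conjunct1[OF less.IH] shift) auto
    moreover have "degree (\<Prod>k \<in> {i<..<j}. N k - 2 * of_nat (r k) * of_nat (L k)) = card {i<..<j}"
      by (rule conjunct1[OF degree_lead_coeff_prod_linear], rule shift) (use ij in auto)
    moreover have "degree (\<Prod>k \<in> {j<..d}. N k) = card {j<..d}"
      by (rule conjunct1[OF degree_lead_coeff_prod_linear], rule less.prems) (use ij in auto)
    moreover have "degree (T i j) \<le> degree (of_nat (r i) * of_nat (r j) * of_nat (L j) ^ 2 :: 'a poly)
        + degree (Pformula (i - 1) (\<lambda>k. N k - 2 * of_nat (r k) * of_nat (L i)) (\<lambda>k. L k - L i) r)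
        + degree (\<Prod>k \<in> {i<..<j}. N k - 2 * of_nat (r k) * of_nat (L k))
        + degree (\<Prod>k \<in> {j<..d}. N k)"
      unfolding T_def
      by (rule order_trans[OF degree_mult_le] add_right_mono degree_mult_le)+
    ultimately show ?thesis
      using ij by simp
  qed
  then have "degree B \<le> d - 2"
    unfolding B_def by (intro degree_sum_le) auto
  then have "d \<noteq> 0 \<Longrightarrow> degree (4 * B) < degree (\<Prod>i = 1..d. N i)"
    using A degree_mult_le[of 4 B] by simp
  moreover have "Pformula d N L r = (\<Prod>i = 1..d. N i) - 4 * B"
    unfolding B_def T_def by (subst Pformula.simps) simp
  ultimately show ?case
    using A by (cases "d = 0") (simp, metis degree_diff_eq_left lead_coeff_diff_left)
qed

section \<open>Separated tuples on abstract tracks\<close>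

text \<open>Track k offers the positions S k, and D k x plays the role of the depth of position x;
  exactly 2 r_k m positions have depth at most m as long as m <= L k.\<close>

definition track_system ::
  "nat \<Rightarrow> (nat \<Rightarrow> 'a set) \<Rightarrow> (nat \<Rightarrow> 'a \<Rightarrow> nat) \<Rightarrow> (nat \<Rightarrow> nat) \<Rightarrow> (nat \<Rightarrow> nat) \<Rightarrow> (nat \<Rightarrow> nat) \<Rightarrow> bool"
  where "track_system d S D N L r \<longleftrightarrow>
    (\<forall>k \<in> {1..d}. finite (S k) \<and> card (S k) = N k \<and>
       (\<forall>m \<le> L k. card {x \<in> S k. D k x \<le> m} = 2 * r k * m)) \<and>
    (\<forall>i j. 1 \<le> i \<longrightarrow> i < j \<longrightarrow> j \<le> d \<longrightarrow> L j \<le> L i)"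

definition separated :: "nat \<Rightarrow> (nat \<Rightarrow> 'a \<Rightarrow> nat) \<Rightarrow> (nat \<Rightarrow> nat) \<Rightarrow> (nat \<Rightarrow> 'a) \<Rightarrow> bool"
  where "separated d D L p \<longleftrightarrow>
    (\<forall>i j. 1 \<le> i \<longrightarrow> i < j \<longrightarrow> j \<le> d \<longrightarrow> \<not> (D i (p i) \<le> L j \<and> D j (p j) \<le> L j))"

definition separated_tuples :: "nat \<Rightarrow> (nat \<Rightarrow> 'a set) \<Rightarrow> (nat \<Rightarrow> 'a \<Rightarrow> nat) \<Rightarrow> (nat \<Rightarrow> nat) \<Rightarrow> (nat \<Rightarrow> 'a) set"
  where "separated_tuples d S D L = {p \<in> Pi\<^sub>E {1..d} S. separated d D L p}"

definition near_tuples ::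
  "nat \<Rightarrow> (nat \<Rightarrow> 'a set) \<Rightarrow> (nat \<Rightarrow> 'a \<Rightarrow> nat) \<Rightarrow> (nat \<Rightarrow> nat) \<Rightarrow> nat \<Rightarrow> (nat \<Rightarrow> 'a) set"
  where "near_tuples d S D L m = {p \<in> separated_tuples d S D L. \<exists>i \<in> {1..d}. D i (p i) \<le> m}"

definition far_tuples ::
  "nat \<Rightarrow> (nat \<Rightarrow> 'a set) \<Rightarrow> (nat \<Rightarrow> 'a \<Rightarrow> nat) \<Rightarrow> (nat \<Rightarrow> nat) \<Rightarrow> nat \<Rightarrow> (nat \<Rightarrow> 'a) set"
  where "far_tuples d S D L m = {p \<in> separated_tuples d S D L. \<forall>i \<in> {1..d}. m < D i (p i)}"

lemma card_PiE_insert_Un: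
  assumes "a \<notin> I" and "X \<subseteq> Pi\<^sub>E I S" "X' \<subseteq> Pi\<^sub>E I S" and "T \<subseteq> S a" "T' \<subseteq> S a" "T \<inter> T' = {}"
    and "finite X" "finite X'" "finite T" "finite T'"
  shows "card {p \<in> Pi\<^sub>E (insert a I) S. restrict p I \<in> X \<and> p a \<in> T \<or> restrict p I \<in> X' \<and> p a \<in> T'}
    = card X * card T + card X' * card T'"
proof -
  define f where "f = (\<lambda>(t, q). q(a := t) :: 'a \<Rightarrow> 'b)"
  have "{p \<in> Pi\<^sub>E (insert a I) S. restrict p I \<in> X \<and> p a \<in> T \<or> restrict p I \<in> X' \<and> p a \<in> T'}
      = f ` (T \<times> X \<union> T' \<times> X')"
  proof (intro equalityI subsetI)
    fix p assume p: "p \<in> {p \<in> Pi\<^sub>E (insert a I) S. restrict p I \<in> X \<and> p a \<in> T \<or> restrict p I \<in> X' \<and> p a \<in> T'}"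
    then have "p = f (p a, restrict p I)"
      by (auto simp: f_def fun_eq_iff PiE_def extensional_def)
    with p show "p \<in> f ` (T \<times> X \<union> T' \<times> X')"
      by blast
  next
    fix p assume "p \<in> f ` (T \<times> X \<union> T' \<times> X')"
    then obtain t q where p: "p = q(a := t)" and tq: "(t, q) \<in> T \<times> X \<union> T' \<times> X'"
      by (auto simp: f_def)
    with assms(2-5) have "q \<in> Pi\<^sub>E I S" "t \<in> S a"
      by auto
    with assms(1) have "p \<in> Pi\<^sub>E (insert a I) S" "restrict p I = q" "p a = t"
      by (simp_all add: p PiE_fun_upd restrict_fupd PiE_restrict)
    with tq show "p \<in> {p \<in> Pi\<^sub>E (insert a I) S. restrict p I \<in> X \<and> p a \<in> T \<or> restrict p I \<in> X' \<and> p a \<in> T'}"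
      by auto
  qed
  moreover have "inj_on f (T \<times> X \<union> T' \<times> X')"
    unfolding f_def by (rule inj_on_subset[OF inj_combinator[OF assms(1), of S]]) (use assms(2-5) in blast)
  moreover have "card (T \<times> X \<union> T' \<times> X') = card X * card T + card X' * card T'"
    using assms(6-10) by (subst card_Un_disjoint) (auto simp: card_cartesian_product)
  ultimately show ?thesis
    by (simp add: card_image)
qed

lemma track_system_mono: "track_system d S D N L r \<Longrightarrow> e \<le> d \<Longrightarrow> track_system e S D N L r"
  unfolding track_system_def by auto

lemma finite_PiE_track_system: "track_system d S D N L r \<Longrightarrow> finite (Pi\<^sub>E {1..d} S)"
  unfolding track_system_def by (intro finite_PiE) auto

lemma track_system_finite: "track_system d S D N L r \<Longrightarrow> k \<in> {1..d} \<Longrightarrow> finite (S k)"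
  unfolding track_system_def by blast

lemma track_system_card: "track_system d S D N L r \<Longrightarrow> k \<in> {1..d} \<Longrightarrow> card (S k) = N k"
  unfolding track_system_def by blast

lemma track_system_card_near:
  "track_system d S D N L r \<Longrightarrow> k \<in> {1..d} \<Longrightarrow> m \<le> L k \<Longrightarrow> card {x \<in> S k. D k x \<le> m} = 2 * r k * m"
  unfolding track_system_def by blast

lemma track_system_antimono:
  assumes "track_system d S D N L r" "1 \<le> i" "i \<le> j" "j \<le> d"
  shows "L j \<le> L i"
proof (cases "i = j")
  case False
  with assms show ?thesis
    unfolding track_system_def by simp
qed simp

lemma track_system_le:
  assumes "track_system d S D N L r" "k \<in> {1..d}" "m \<le> L k"
  shows "2 * r k * m \<le> N k"
proof -
  have "card {x \<in> S k. D k x \<le> m} \<le> card (S k)"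
    using track_system_finite[OF assms(1,2)] by (intro card_mono) auto
  with assms show ?thesis
    by (simp add: track_system_card_near track_system_card)
qed

lemma track_system_card_far:
  assumes "track_system d S D N L r" "k \<in> {1..d}" "m \<le> L k"
  shows "int (card {x \<in> S k. m < D k x}) = int (N k) - 2 * int (r k) * int m"
proof -
  have "{x \<in> S k. m < D k x} = S k - {x \<in> S k. D k x \<le> m}"
    by auto
  then have "card {x \<in> S k. m < D k x} = N k - 2 * r k * m"
    using assms by (simp add: card_Diff_subset track_system_finite track_system_card track_system_card_near)
  with track_system_le[OF assms] show ?thesis
    by (simp add: of_nat_diff)
qed

lemma separated_cong:
  assumes "\<And>i. i \<in> {1..e} \<Longrightarrow> p i = q i"
  shows "separated e D L p = separated e D L q"
proof -
  have "p i = q i \<and> p j = q j" if "1 \<le> i" "i < j" "j \<le> e" for i j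
    using assms that by auto
  then show ?thesis
    unfolding separated_def by metis
qed

lemma separated_restrict: "{1..e} \<subseteq> A \<Longrightarrow> separated e D L (restrict p A) = separated e D L p"
  by (rule separated_cong) auto

lemma separated_Suc:
  "separated (Suc e) D L p \<longleftrightarrow> separated e D L p \<and>
    (D (Suc e) (p (Suc e)) \<le> L (Suc e) \<longrightarrow> (\<forall>i \<in> {1..e}. L (Suc e) < D i (p i)))"
    (is "_ \<longleftrightarrow> ?below \<and> ?top")
proof (rule iffI[rotated])
  assume "?below \<and> ?top"
  then have ?below ?top
    by blast+
  then show "separated (Suc e) D L p"
    unfolding separated_def
  proof (intro allI impI)
    fix i j assume ij: "1 \<le> i" "i < j" "j \<le> Suc e"
    show "\<not> (D i (p i) \<le> L j \<and> D j (p j) \<le> L j)"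
    proof (cases "j = Suc e")
      case True
      with ij have "i \<in> {1..e}"
        by simp
      with \<open>?top\<close> True have "D j (p j) \<le> L j \<Longrightarrow> L j < D i (p i)"
        by simp
      then show ?thesis
        by linarith
    next
      case False
      with ij \<open>?below\<close> show ?thesis
        by (simp add: separated_def)
    qed
  qed
next
  assume sep: "separated (Suc e) D L p"
  have ?top
  proof (intro impI ballI)
    fix i assume "D (Suc e) (p (Suc e)) \<le> L (Suc e)" "i \<in> {1..e}"
    with sep[unfolded separated_def, rule_format, of i "Suc e"] show "L (Suc e) < D i (p i)"
      by auto
  qed
  with sep show "?below \<and> ?top"
    by (simp add: separated_def)
qed

lemma separated_tuples_Suc_iff:
  "p \<in> separated_tuples (Suc e) S D L \<longleftrightarrow>
    p \<in> Pi\<^sub>E (insert (Suc e) {1..e}) S \<and> restrict p {1..e} \<in> separated_tuples e S D L \<and>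
    (D (Suc e) (p (Suc e)) \<le> L (Suc e) \<longrightarrow> restrict p {1..e} \<in> far_tuples e S D L (L (Suc e)))"
proof -
  have "{1..Suc e} = insert (Suc e) {1..e}"
    by auto
  moreover have "p \<in> Pi\<^sub>E (insert (Suc e) {1..e}) S \<Longrightarrow> restrict p {1..e} \<in> Pi\<^sub>E {1..e} S"
    by auto
  moreover have "(\<forall>i \<in> {1..e}. L (Suc e) < D i (restrict p {1..e} i)) \<longleftrightarrow> (\<forall>i \<in> {1..e}. L (Suc e) < D i (p i))"
    by simp
  ultimately show ?thesis
    unfolding far_tuples_def separated_tuples_def mem_Collect_eq separated_Suc
      separated_restrict[OF subset_refl]
    by blast
qed

lemma card_separated_tuples_split:
  assumes "finite (Pi\<^sub>E {1..e} S)"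
  shows "card (separated_tuples e S D L) = card (near_tuples e S D L m) + card (far_tuples e S D L m)"
proof -
  have "separated_tuples e S D L = near_tuples e S D L m \<union> far_tuples e S D L m"
    "near_tuples e S D L m \<inter> far_tuples e S D L m = {}"
    by (auto simp: near_tuples_def far_tuples_def not_less)
  moreover have "finite (separated_tuples e S D L)"
    using assms by (rule rev_finite_subset) (auto simp: separated_tuples_def)
  ultimately show ?thesis
    by (metis card_Un_disjoint finite_Un)
qed

lemma card_separated_tuples_Suc:
  assumes sys: "track_system (Suc e) S D N L r"
  shows "int (card (separated_tuples (Suc e) S D L)) = int (N (Suc e)) * int (card (separated_tuples e S D L))
    - 2 * int (r (Suc e)) * int (L (Suc e)) * int (card (near_tuples e S D L (L (Suc e))))"
proof -
  let ?c = "Suc e"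
  have fin: "finite (Pi\<^sub>E {1..e} S)" "finite (S ?c)"
    using finite_PiE_track_system[OF track_system_mono[OF sys]] track_system_finite[OF sys]
    by simp_all
  have sep_eq: "separated_tuples ?c S D L = {p \<in> Pi\<^sub>E (insert ?c {1..e}) S.
      restrict p {1..e} \<in> separated_tuples e S D L \<and> p ?c \<in> {x \<in> S ?c. L ?c < D ?c x} \<or>
      restrict p {1..e} \<in> far_tuples e S D L (L ?c) \<and> p ?c \<in> {x \<in> S ?c. D ?c x \<le> L ?c}}"
  proof (intro set_eqI)
    fix p
    show "p \<in> separated_tuples ?c S D L \<longleftrightarrow> p \<in> {p \<in> Pi\<^sub>E (insert ?c {1..e}) S.
      restrict p {1..e} \<in> separated_tuples e S D L \<and> p ?c \<in> {x \<in> S ?c. L ?c < D ?c x} \<or>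
      restrict p {1..e} \<in> far_tuples e S D L (L ?c) \<and> p ?c \<in> {x \<in> S ?c. D ?c x \<le> L ?c}}"
      using PiE_mem[of p "insert ?c {1..e}" S ?c]
      by (auto simp: separated_tuples_Suc_iff far_tuples_def)
  qed
  have "card (separated_tuples ?c S D L) = card (separated_tuples e S D L) * card {x \<in> S ?c. L ?c < D ?c x}
      + card (far_tuples e S D L (L ?c)) * card {x \<in> S ?c. D ?c x \<le> L ?c}"
    unfolding sep_eq using fin by (intro card_PiE_insert_Un)
      (auto simp: separated_tuples_def far_tuples_def intro: rev_finite_subset)
  then have "int (card (separated_tuples ?c S D L))
      = int (card (separated_tuples e S D L)) * int (card {x \<in> S ?c. L ?c < D ?c x})
        + int (card (far_tuples e S D L (L ?c))) * int (card {x \<in> S ?c. D ?c x \<le> L ?c})"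
    by simp
  also have "\<dots> = int (card (separated_tuples e S D L)) * (int (N ?c) - 2 * int (r ?c) * int (L ?c))
        + int (card (far_tuples e S D L (L ?c))) * (2 * int (r ?c) * int (L ?c))"
    using track_system_card_far[OF sys, of ?c "L ?c"] track_system_card_near[OF sys, of ?c "L ?c"]
    by simp
  also have "\<dots> = int (N ?c) * int (card (separated_tuples e S D L))
      - 2 * int (r ?c) * int (L ?c) * int (card (near_tuples e S D L (L ?c)))"
    using card_separated_tuples_split[OF fin(1), of D L "L ?c"] by (simp add: algebra_simps)
  finally show ?thesis .
qed

lemma card_near_tuples_Suc:
  assumes sys: "track_system (Suc e) S D N L r" and "m \<le> L (Suc e)"
  shows "int (card (near_tuples (Suc e) S D L m))
    = 2 * int (r (Suc e)) * int m * int (card (far_tuples e S D L (L (Suc e))))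
      + (int (N (Suc e)) - 2 * int (r (Suc e)) * int (L (Suc e))) * int (card (near_tuples e S D L m))"
proof -
  let ?c = "Suc e"
  have fin: "finite (Pi\<^sub>E {1..e} S)" "finite (S ?c)"
    using finite_PiE_track_system[OF track_system_mono[OF sys]] track_system_finite[OF sys]
    by simp_all
  have near_eq: "near_tuples ?c S D L m = {p \<in> Pi\<^sub>E (insert ?c {1..e}) S.
      restrict p {1..e} \<in> near_tuples e S D L m \<and> p ?c \<in> {x \<in> S ?c. L ?c < D ?c x} \<or>
      restrict p {1..e} \<in> far_tuples e S D L (L ?c) \<and> p ?c \<in> {x \<in> S ?c. D ?c x \<le> m}}"
  proof (intro set_eqI)
    fix p
    have "{1..?c} = insert ?c {1..e}"
      by auto
    then show "p \<in> near_tuples ?c S D L m \<longleftrightarrow> p \<in> {p \<in> Pi\<^sub>E (insert ?c {1..e}) S.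
      restrict p {1..e} \<in> near_tuples e S D L m \<and> p ?c \<in> {x \<in> S ?c. L ?c < D ?c x} \<or>
      restrict p {1..e} \<in> far_tuples e S D L (L ?c) \<and> p ?c \<in> {x \<in> S ?c. D ?c x \<le> m}}"
      using PiE_mem[of p "insert ?c {1..e}" S ?c] \<open>m \<le> L ?c\<close>
      by (auto simp: near_tuples_def separated_tuples_Suc_iff far_tuples_def)
  qed
  have "card (near_tuples ?c S D L m) = card (near_tuples e S D L m) * card {x \<in> S ?c. L ?c < D ?c x}
      + card (far_tuples e S D L (L ?c)) * card {x \<in> S ?c. D ?c x \<le> m}"
    unfolding near_eq using fin \<open>m \<le> L ?c\<close> by (intro card_PiE_insert_Un)
      (auto simp: near_tuples_def separated_tuples_def far_tuples_def intro: rev_finite_subset)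
  then have "int (card (near_tuples ?c S D L m))
      = int (card (near_tuples e S D L m)) * int (card {x \<in> S ?c. L ?c < D ?c x})
        + int (card (far_tuples e S D L (L ?c))) * int (card {x \<in> S ?c. D ?c x \<le> m})"
    by simp
  also have "\<dots> = int (card (near_tuples e S D L m)) * (int (N ?c) - 2 * int (r ?c) * int (L ?c))
        + int (card (far_tuples e S D L (L ?c))) * (2 * int (r ?c) * int m)"
    using track_system_card_far[OF sys, of ?c "L ?c"] track_system_card_near[OF sys, of ?c m]
      \<open>m \<le> L ?c\<close> by simp
  finally show ?thesis
    by (simp add: algebra_simps)
qed

lemma card_near_tuples:
  assumes "track_system e S D N L r" and "\<forall>k \<in> {1..e}. m \<le> L k"
  shows "int (card (near_tuples e S D L m)) = (\<Sum>i = 1..e.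
    2 * int (r i) * int m * int (card (far_tuples (i - 1) S D L (L i)))
      * (\<Prod>k \<in> {i<..e}. int (N k) - 2 * int (r k) * int (L k)))"
  using assms
proof (induction e)
  case 0
  then show ?case
    by (simp add: near_tuples_def)
next
  case (Suc e)
  let ?f = "\<lambda>i. 2 * int (r i) * int m * int (card (far_tuples (i - 1) S D L (L i)))"
  let ?P = "\<lambda>k. int (N k) - 2 * int (r k) * int (L k)"
  have IH: "int (card (near_tuples e S D L m)) = (\<Sum>i = 1..e. ?f i * (\<Prod>k \<in> {i<..e}. ?P k))"
    using Suc by (simp add: track_system_mono)
  have "m \<le> L (Suc e)"
    using Suc.prems(2) by simp
  then have "int (card (near_tuples (Suc e) S D L m)) = ?f (Suc e) + ?P (Suc e) * int (card (near_tuples e S D L m))"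
    using card_near_tuples_Suc[OF Suc.prems(1)] by simp
  also have "\<dots> = ?f (Suc e) + (\<Sum>i = 1..e. ?f i * (\<Prod>k \<in> {i<..Suc e}. ?P k))"
    unfolding IH sum_distrib_left
  proof (intro arg_cong2[where f = "(+)"] sum.cong refl)
    fix i assume "i \<in> {1..e}"
    then have "{i<..Suc e} = insert (Suc e) {i<..e}"
      by auto
    then show "?P (Suc e) * (?f i * (\<Prod>k \<in> {i<..e}. ?P k)) = ?f i * (\<Prod>k \<in> {i<..Suc e}. ?P k)"
      by simp
  qed
  also have "\<dots> = (\<Sum>i = 1..Suc e. ?f i * (\<Prod>k \<in> {i<..Suc e}. ?P k))"
    by (simp add: sum.nat_ivl_Suc')
  finally show ?case .
qed

lemma separated_shift:
  assumes "\<forall>i \<in> {1..e}. m < D i (p i)" and "\<forall>k \<in> {1..e}. m \<le> L k"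
  shows "separated e (\<lambda>k x. D k x - m) (\<lambda>k. L k - m) p = separated e D L p"
proof -
  have shift: "(D i (p i) - m \<le> L j - m \<and> D j (p j) - m \<le> L j - m) \<longleftrightarrow> (D i (p i) \<le> L j \<and> D j (p j) \<le> L j)"
    if "1 \<le> i" "i < j" "j \<le> e" for i j
    using assms(1)[rule_format, of i] assms(1)[rule_format, of j] assms(2)[rule_format, of j] that
    by auto
  show ?thesis
    unfolding separated_def
  proof (intro iffI allI impI)
    fix i j assume H: "\<forall>i j. 1 \<le> i \<longrightarrow> i < j \<longrightarrow> j \<le> e \<longrightarrow> \<not> (D i (p i) - m \<le> L j - m \<and> D j (p j) - m \<le> L j - m)"
      and ij: "1 \<le> i" "i < j" "j \<le> e"
    from H[rule_format, OF ij] shift[OF ij] show "\<not> (D i (p i) \<le> L j \<and> D j (p j) \<le> L j)"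
      by simp
  next
    fix i j assume H: "\<forall>i j. 1 \<le> i \<longrightarrow> i < j \<longrightarrow> j \<le> e \<longrightarrow> \<not> (D i (p i) \<le> L j \<and> D j (p j) \<le> L j)"
      and ij: "1 \<le> i" "i < j" "j \<le> e"
    from H[rule_format, OF ij] shift[OF ij] show "\<not> (D i (p i) - m \<le> L j - m \<and> D j (p j) - m \<le> L j - m)"
      by simp
  qed
qed

lemma far_tuples_eq_shift:
  assumes "\<forall>k \<in> {1..e}. m \<le> L k"
  shows "far_tuples e S D L m
    = separated_tuples e (\<lambda>k. {x \<in> S k. m < D k x}) (\<lambda>k x. D k x - m) (\<lambda>k. L k - m)"
proof (intro set_eqI)
  fix p
  have PiE_shift: "p \<in> Pi\<^sub>E {1..e} (\<lambda>k. {x \<in> S k. m < D k x}) \<longleftrightarrow>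
      p \<in> Pi\<^sub>E {1..e} S \<and> (\<forall>i \<in> {1..e}. m < D i (p i))"
    by (auto simp: PiE_iff)
  show "p \<in> far_tuples e S D L m
    \<longleftrightarrow> p \<in> separated_tuples e (\<lambda>k. {x \<in> S k. m < D k x}) (\<lambda>k x. D k x - m) (\<lambda>k. L k - m)"
  proof (cases "\<forall>i \<in> {1..e}. m < D i (p i)")
    case True
    then show ?thesis
      unfolding far_tuples_def separated_tuples_def mem_Collect_eq PiE_shift
        separated_shift[of e m D p L, OF True assms]
      by blast
  next
    case False
    then show ?thesis
      unfolding far_tuples_def separated_tuples_def mem_Collect_eq PiE_shift
      by blast
  qed
qed

lemma track_system_shift:
  assumes sys: "track_system e S D N L r" and m: "\<forall>k \<in> {1..e}. m \<le> L k"
  shows "track_system e (\<lambda>k. {x \<in> S k. m < D k x}) (\<lambda>k x. D k x - m) (\<lambda>k. N k - 2 * r k * m) (\<lambda>k. L k - m) r"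
  unfolding track_system_def
proof (intro conjI ballI allI impI)
  fix k assume k: "k \<in> {1..e}"
  then have "m \<le> L k"
    using m by blast
  show "finite {x \<in> S k. m < D k x}"
    using track_system_finite[OF sys k] by simp
  have "int (card {x \<in> S k. m < D k x}) = int (N k - 2 * r k * m)"
    using track_system_card_far[OF sys k \<open>m \<le> L k\<close>] track_system_le[OF sys k \<open>m \<le> L k\<close>]
    by (simp add: of_nat_diff)
  then show "card {x \<in> S k. m < D k x} = N k - 2 * r k * m"
    by simp
  fix m' assume "m' \<le> L k - m"
  have "{x \<in> {x \<in> S k. m < D k x}. D k x - m \<le> m'} = {x \<in> S k. D k x \<le> m' + m} - {x \<in> S k. D k x \<le> m}"
    by auto
  moreover have "card {x \<in> S k. D k x \<le> m' + m} = 2 * r k * (m' + m)" "card {x \<in> S k. D k x \<le> m} = 2 * r k * m"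
    using \<open>m' \<le> L k - m\<close> \<open>m \<le> L k\<close> by (simp_all add: track_system_card_near[OF sys k])
  ultimately show "card {x \<in> {x \<in> S k. m < D k x}. D k x - m \<le> m'} = 2 * r k * m'"
    using track_system_finite[OF sys k] by (simp add: card_Diff_subset Collect_mono_iff algebra_simps)
next
  fix i j :: nat assume "1 \<le> i" "i < j" "j \<le> e"
  then show "L j - m \<le> L i - m"
    using track_system_antimono[OF sys] by (simp add: diff_le_mono)
qed

lemma card_separated_tuples_recursion:
  assumes sys: "track_system (Suc e) S D N L r"
  shows "int (card (separated_tuples (Suc e) S D L))
    = int (N (Suc e)) * int (card (separated_tuples e S D L))
      - 4 * int (r (Suc e)) * int (L (Suc e)) ^ 2 * (\<Sum>i = 1..e. int (r i)
        * int (card (separated_tuples (i - 1) (\<lambda>k. {x \<in> S k. L i < D k x}) (\<lambda>k x. D k x - L i) (\<lambda>k. L k - L i)))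
        * (\<Prod>k \<in> {i<..e}. int (N k) - 2 * int (r k) * int (L k)))"
proof -
  let ?P = "\<lambda>k. int (N k) - 2 * int (r k) * int (L k)"
  let ?F = "\<lambda>i. separated_tuples (i - 1) (\<lambda>k. {x \<in> S k. L i < D k x}) (\<lambda>k x. D k x - L i) (\<lambda>k. L k - L i)"
  have sys_e: "track_system e S D N L r"
    by (rule track_system_mono[OF sys]) simp
  have below_top: "\<forall>k \<in> {1..e}. L (Suc e) \<le> L k"
    using track_system_antimono[OF sys] by simp
  have "int (card (near_tuples e S D L (L (Suc e))))
      = 2 * int (L (Suc e)) * (\<Sum>i = 1..e. int (r i) * int (card (?F i)) * (\<Prod>k \<in> {i<..e}. ?P k))"
    unfolding card_near_tuples[OF sys_e below_top] sum_distrib_left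
  proof (intro sum.cong refl)
    fix i assume "i \<in> {1..e}"
    with track_system_antimono[OF sys] have "far_tuples (i - 1) S D L (L i) = ?F i"
      by (intro far_tuples_eq_shift) auto
    then show "2 * int (r i) * int (L (Suc e)) * int (card (far_tuples (i - 1) S D L (L i))) * (\<Prod>k \<in> {i<..e}. ?P k)
        = 2 * int (L (Suc e)) * (int (r i) * int (card (?F i)) * (\<Prod>k \<in> {i<..e}. ?P k))"
      by simp
  qed
  with card_separated_tuples_Suc[OF sys] show ?thesis
    by (simp add: power2_eq_square algebra_simps)
qed

theorem card_separated_tuples:
  "track_system d S D N L r \<Longrightarrow> int (card (separated_tuples d S D L)) = Pformula d (\<lambda>k. int (N k)) L r"
proof (induction d arbitrary: S D N L rule: less_induct)
  case (less d)
  show ?case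
  proof (cases d)
    case 0
    then show ?thesis
      by (simp add: separated_tuples_def separated_def)
  next
    case (Suc e)
    with less.prems have sys: "track_system (Suc e) S D N L r"
      by simp
    have shifted: "int (card (separated_tuples (i - 1) (\<lambda>k. {x \<in> S k. L i < D k x}) (\<lambda>k x. D k x - L i) (\<lambda>k. L k - L i)))
        = Pformula (i - 1) (\<lambda>k. int (N k) - 2 * int (r k) * int (L i)) (\<lambda>k. L k - L i) r"
      if "i \<in> {1..e}" for i
    proof -
      have sys_i: "track_system (i - 1) S D N L r"
        by (rule track_system_mono[OF sys]) (use that in auto)
      have below: "\<forall>k \<in> {1..i - 1}. L i \<le> L k"
        using that track_system_antimono[OF sys] by auto
      have "int (card (separated_tuples (i - 1) (\<lambda>k. {x \<in> S k. L i < D k x}) (\<lambda>k x. D k x - L i) (\<lambda>k. L k - L i)))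
          = Pformula (i - 1) (\<lambda>k. int (N k - 2 * r k * L i)) (\<lambda>k. L k - L i) r"
        using that Suc by (intro less.IH track_system_shift sys_i below) auto
      also have "\<dots> = Pformula (i - 1) (\<lambda>k. int (N k) - 2 * int (r k) * int (L i)) (\<lambda>k. L k - L i) r"
        using track_system_le[OF sys_i] below by (intro Pformula_cong) (simp add: of_nat_diff)
      finally show ?thesis .
    qed
    have "track_system e S D N L r"
      by (rule track_system_mono[OF sys]) simp
    with less.IH[of e] Suc have IH_e: "int (card (separated_tuples e S D L)) = Pformula e (\<lambda>k. int (N k)) L r"
      by simp
    show ?thesis
      unfolding Suc Pformula_Suc card_separated_tuples_recursion[OF sys] IH_e
      by (intro arg_cong2[where f = "(-)"] arg_cong2[where f = "(*)"] refl sum.cong) (simp only: shifted)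
  qed
qed

section \<open>Runs, windows and depths\<close>

lemma in_window_iff_mod:
  fixes n m y :: int
  assumes n: "0 < n" and m: "0 \<le> m" "2 * m \<le> n"
  shows "in_window n m y \<longleftrightarrow> (y + m - 1) mod n < 2 * m"
proof
  assume "in_window n m y"
  then obtain w where w: "w \<in> window n m" "y mod n = w mod n"
    unfolding in_window_def by blast
  then have "(y + m - 1) mod n = (w + m - 1) mod n"
    by (metis mod_add_left_eq mod_diff_left_eq)
  moreover have "(w + m - 1) mod n < 2 * m"
  proof (cases "w \<le> m")
    case True
    with w(1) m n have "(w + m - 1) mod n = w + m - 1"
      by (intro mod_pos_pos_trivial) (auto simp: window_def)
    with True show ?thesis
      by simp
  next
    case False
    with w(1) have "n - m + 1 \<le> w" "w \<le> n"
      by (auto simp: window_def)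
    have "(w + m - 1) mod n = (w + m - 1 - n) mod n"
      using minus_mod_self2[of "w + m - 1" n] by simp
    also have "\<dots> = w + m - 1 - n"
      using \<open>n - m + 1 \<le> w\<close> \<open>w \<le> n\<close> m False by (intro mod_pos_pos_trivial) auto
    finally show ?thesis
      using \<open>w \<le> n\<close> m by simp
  qed
  ultimately show "(y + m - 1) mod n < 2 * m"
    by simp
next
  define t where "t = (y + m - 1) mod n"
  assume "(y + m - 1) mod n < 2 * m"
  then have t: "0 \<le> t" "t < n" "t < 2 * m"
    using n by (auto simp: t_def)
  have "(t - (m - 1)) mod n = (y + m - 1 - (m - 1)) mod n"
    unfolding t_def by (simp add: mod_diff_left_eq)
  then have "(t - m + 1) mod n = y mod n"
    by (simp add: algebra_simps)
  moreover have "(t - m + 1 + n) mod n = (t - m + 1) mod n"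
    by simp
  moreover have "t - m + 1 \<in> window n m \<or> t - m + 1 + n \<in> window n m"
    using t by (auto simp: window_def)
  ultimately show "in_window n m y"
    unfolding in_window_def by metis
qed

lemma in_window_mono:
  assumes "in_window n m' y" "0 \<le> m'" "m' \<le> m"
  shows "in_window n m y"
proof -
  have "window n m' \<subseteq> window n m"
    using assms(2,3) by (auto simp: window_def)
  with assms(1) show ?thesis
    unfolding in_window_def by blast
qed

lemma in_window_self:
  assumes "0 < n"
  shows "in_window n n y"
proof -
  have "0 \<le> (y - 1) mod n" "(y - 1) mod n < n"
    using assms by simp_all
  then have "(y - 1) mod n + 1 \<in> window n n"
    by (auto simp: window_def)
  moreover have "((y - 1) mod n + 1) mod n = y mod n"
    by (metis diff_add_cancel mod_add_left_eq)
  ultimately show ?thesis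
    unfolding in_window_def by metis
qed

lemma bij_betw_shift_mod:
  fixes n c :: int
  assumes n: "0 < n"
  shows "bij_betw (\<lambda>x. (x + c) mod n) {1..n} {0..<n}"
proof -
  have inj: "inj_on (\<lambda>x. (x + c) mod n) {1..n}"
  proof (rule inj_onI)
    fix x y assume "x \<in> {1..n}" "y \<in> {1..n}" "(x + c) mod n = (y + c) mod n"
    then have "n dvd x - y" "\<bar>x - y\<bar> < n"
      by (auto simp: mod_eq_dvd_iff)
    then obtain k where k: "x - y = n * k"
      by (auto elim: dvdE)
    with n \<open>\<bar>x - y\<bar> < n\<close> have "\<bar>k\<bar> < 1"
      by (simp add: abs_mult)
    with k show "x = y"
      by simp
  qed
  have "card ((\<lambda>x. (x + c) mod n) ` {1..n}) = card {0..<n}"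
    using card_image[OF inj] by simp
  then have "(\<lambda>x. (x + c) mod n) ` {1..n} = {0..<n}"
    using n by (intro card_subset_eq) auto
  with inj show ?thesis
    by (simp add: bij_betw_def)
qed

lemma card_preimage_bij_betw:
  assumes "bij_betw f A B" "W \<subseteq> B"
  shows "card {x \<in> A. f x \<in> W} = card W"
proof -
  have "f ` {x \<in> A. f x \<in> W} = W"
    using assms unfolding bij_betw_def by blast
  with assms(1) have "bij_betw f {x \<in> A. f x \<in> W} W"
    by (intro bij_betw_subset[OF assms(1)]) auto
  then show ?thesis
    by (rule bij_betw_same_card)
qed

lemma card_shift_mod_less:
  fixes n c :: int and k :: nat
  assumes "0 < n" "int k \<le> n"
  shows "card {x \<in> {1..n}. (x + c) mod n < int k} = k"
proof -
  have "{x \<in> {1..n}. (x + c) mod n < int k} = {x \<in> {1..n}. (x + c) mod n \<in> {0..<int k}}"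
    using assms by auto
  also have "card \<dots> = k"
    using card_preimage_bij_betw[OF bij_betw_shift_mod[OF assms(1)], of "{0..<int k}" c] assms
    by simp
  finally show ?thesis .
qed

lemma card_shifted_blocks:
  fixes n :: int and s :: "nat \<Rightarrow> int" and k R :: nat
  assumes n: "0 < n" "int k \<le> n"
    and sep: "\<And>a b. 1 \<le> a \<Longrightarrow> a < b \<Longrightarrow> b \<le> R \<Longrightarrow> int k \<le> s b - s a \<and> s b - s a \<le> n - int k"
  shows "card {x \<in> {1..n}. \<exists>a \<in> {1..R}. (x + s a) mod n < int k} = R * k"
proof -
  define B where "B a = {x \<in> {1..n}. (x + s a) mod n < int k}" for a
  have disjoint: "B a \<inter> B b = {}" if "1 \<le> a" "a < b" "b \<le> R" for a b
  proof -
    have "\<not> (x + s b) mod n < int k" if "x \<in> B a" for x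
    proof -
      define u where "u = (x + s a) mod n"
      have u: "0 \<le> u" "u < int k"
        using \<open>x \<in> B a\<close> n by (auto simp: B_def u_def)
      have "(x + s b) mod n = (u + (s b - s a)) mod n"
        unfolding u_def by (simp add: mod_add_left_eq)
      also have "\<dots> = u + (s b - s a)"
        using u sep[OF \<open>1 \<le> a\<close> \<open>a < b\<close> \<open>b \<le> R\<close>] by (intro mod_pos_pos_trivial) auto
      finally show ?thesis
        using u sep[OF \<open>1 \<le> a\<close> \<open>a < b\<close> \<open>b \<le> R\<close>] by simp
    qed
    then show ?thesis
      by (auto simp: B_def)
  qed
  have "{x \<in> {1..n}. \<exists>a \<in> {1..R}. (x + s a) mod n < int k} = (\<Union>a \<in> {1..R}. B a)"
    by (auto simp: B_def)
  also have "card \<dots> = (\<Sum>a \<in> {1..R}. card (B a))"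
  proof (rule card_UN_disjoint)
    show "\<forall>a \<in> {1..R}. \<forall>b \<in> {1..R}. a \<noteq> b \<longrightarrow> B a \<inter> B b = {}"
      using disjoint by (metis Int_commute atLeastAtMost_iff linorder_neqE_nat)
  qed (auto simp: B_def intro: rev_finite_subset[of "{1..n}"])
  also have "\<dots> = R * k"
    using card_shift_mod_less[OF n] by (simp add: B_def)
  finally show ?thesis .
qed

lemma gap_sums_separated:
  fixes G :: "nat \<Rightarrow> nat"
  assumes gaps: "\<forall>j \<in> {1..R}. k \<le> G j" and total: "(\<Sum>j = 1..R. G j) = n"
    and ab: "1 \<le> a" "a < b" "b \<le> R"
  shows "int k \<le> (\<Sum>c = 1..<b. int (G c)) - (\<Sum>c = 1..<a. int (G c))
    \<and> (\<Sum>c = 1..<b. int (G c)) - (\<Sum>c = 1..<a. int (G c)) \<le> int n - int k"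
proof -
  have split: "(\<Sum>c = 1..<a. int (G c)) + (\<Sum>c = a..<b. int (G c)) = (\<Sum>c = 1..<b. int (G c))"
    using ab by (intro sum.atLeastLessThan_concat) auto
  have lower: "int (G a) \<le> (\<Sum>c = a..<b. int (G c))"
    by (rule member_le_sum) (use ab in auto)
  have "(\<Sum>c = 1..R. int (G c)) = (\<Sum>c \<in> {1..R} - {a..<b}. int (G c)) + (\<Sum>c = a..<b. int (G c))"
    by (rule sum.subset_diff) (use ab in auto)
  moreover have "(\<Sum>c = 1..R. int (G c)) = int n"
    using total by (metis of_nat_sum)
  moreover have "int (G b) \<le> (\<Sum>c \<in> {1..R} - {a..<b}. int (G c))"
    by (rule member_le_sum) (use ab in auto)
  ultimately have upper: "(\<Sum>c = a..<b. int (G c)) \<le> int n - int (G b)"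
    by linarith
  have "k \<le> G a" "k \<le> G b"
    using gaps ab by auto
  with split lower upper show ?thesis
    by linarith
qed

definition window_depth ::
  "(nat \<Rightarrow> nat) \<Rightarrow> (nat \<Rightarrow> nat) \<Rightarrow> (nat \<Rightarrow> nat) \<Rightarrow> (nat \<Rightarrow> nat \<Rightarrow> nat) \<Rightarrow> nat \<Rightarrow> int \<Rightarrow> nat"
  where "window_depth n l r g k x =
    (LEAST m. \<exists>a \<in> {1..r k}. in_window (int (n k)) (int m) (run_end l g (\<lambda>_. x) k a))"

lemma window_depth_le_iff:
  assumes "1 \<le> r k" "0 < n k"
  shows "window_depth n l r g k x \<le> m \<longleftrightarrow>
    (\<exists>a \<in> {1..r k}. in_window (int (n k)) (int m) (run_end l g (\<lambda>_. x) k a))"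
    (is "_ \<longleftrightarrow> ?hit m")
proof
  have "?hit (n k)"
    using assms in_window_self[of "int (n k)"] by auto
  then have "?hit (window_depth n l r g k x)"
    unfolding window_depth_def by (rule LeastI)
  moreover assume "window_depth n l r g k x \<le> m"
  ultimately show "?hit m"
    using in_window_mono by (meson of_nat_0_le_iff of_nat_le_iff)
next
  assume "?hit m"
  then show "window_depth n l r g k x \<le> m"
    unfolding window_depth_def by (rule Least_le)
qed

lemma valid_iff_separated:
  assumes "params_ok d n l r"
  shows "valid d n l r g p \<longleftrightarrow> separated d (window_depth n l r g) l p"
proof -
  have depth: "window_depth n l r g k (p k) \<le> m \<longleftrightarrow>
      (\<exists>a \<in> {1..r k}. in_window (int (n k)) (int m) (run_end l g p k a))" if "1 \<le> k" "k \<le> d" for k m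
    using assms that window_depth_le_iff[of r k n l g "p k" m]
    by (simp add: params_ok_def run_end_def)
  have "(window_depth n l r g i (p i) \<le> l j \<and> window_depth n l r g j (p j) \<le> l j) \<longleftrightarrow>
      (\<exists>a b. a \<in> {1..r i} \<and> b \<in> {1..r j} \<and>
        in_window (int (n i)) (int (l j)) (run_end l g p i a) \<and>
        in_window (int (n j)) (int (l j)) (run_end l g p j b))"
    if "1 \<le> i" "i < j" "j \<le> d" for i j
    using depth[of i] depth[of j] that by (auto; blast)
  then show ?thesis
    unfolding valid_def separated_def by blast
qed

lemma card_window_depth_le:
  assumes P: "params_ok d n l r" and G: "gaps_ok d n l r g" and k: "k \<in> {1..d}" and m: "m \<le> l k"
  shows "card {x \<in> {1..int (n k)}. window_depth n l r g k x \<le> m} = 2 * r k * m"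
proof -
  have rk: "1 \<le> r k" "0 < n k" "2 * r k * l k \<le> n k"
    using P k unfolding params_ok_def by auto
  have gaps: "\<forall>j \<in> {1..r k}. 2 * l k \<le> g k j" "(\<Sum>j = 1..r k. g k j) = n k"
    using G k unfolding gaps_ok_def by auto
  have "2 * m \<le> 2 * r k * l k"
    using m rk(1) by (metis mult_le_mono mult.commute mult.left_commute nat_mult_1 le_refl)
  with rk have m2: "int (2 * m) \<le> int (n k)"
    by linarith
  txt \<open>Depth at most m means lying in one of r k blocks of 2 m consecutive residues; the blocks
    are disjoint because all gaps are at least 2 l k.\<close>
  define s where "s a = (\<Sum>c = 1..<a. int (g k c)) + int (l k) - 1 + int m - 1" for a
  have "{x \<in> {1..int (n k)}. window_depth n l r g k x \<le> m}
      = {x \<in> {1..int (n k)}. \<exists>a \<in> {1..r k}. (x + s a) mod int (n k) < int (2 * m)}"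
    using in_window_iff_mod[of "int (n k)" "int m"] rk m2
    by (simp add: window_depth_le_iff run_end_def s_def algebra_simps)
  also have "card \<dots> = r k * (2 * m)"
  proof (rule card_shifted_blocks)
    fix a b assume "1 \<le> a" "a < b" "b \<le> r k"
    from gap_sums_separated[OF gaps this] m show "int (2 * m) \<le> s b - s a \<and> s b - s a \<le> int (n k) - int (2 * m)"
      by (simp add: s_def)
  qed (use rk m2 in auto)
  finally show ?thesis
    by simp
qed

lemma track_system_positions:
  assumes "params_ok d n l r" "gaps_ok d n l r g"
  shows "track_system d (\<lambda>k. {1..int (n k)}) (window_depth n l r g) n l r"
  using assms card_window_depth_le[OF assms] unfolding track_system_def params_ok_def
  by (auto intro: less_imp_le)

theorem count_valid_eq_Pformula:
  assumes "params_ok d n l r" "gaps_ok d n l r g"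
  shows "int (count_valid d n l r g) = Pformula d (\<lambda>k. int (n k)) l r"
proof -
  have "count_valid d n l r g = card (separated_tuples d (\<lambda>k. {1..int (n k)}) (window_depth n l r g) l)"
    unfolding count_valid_def separated_tuples_def using valid_iff_separated[OF assms(1)] by simp
  with card_separated_tuples[OF track_system_positions[OF assms]] show ?thesis
    by simp
qed

lemma gaps_ok_exists:
  assumes "params_ok d n l r"
  shows "gaps_ok d n l r (\<lambda>i j. if j = r i then n i - 2 * l i * (r i - 1) else 2 * l i)"
  unfolding gaps_ok_def
proof (rule ballI, rule conjI)
  fix i assume "i \<in> {1..d}"
  with assms have r: "1 \<le> r i" "2 * r i * l i \<le> n i"
    unfolding params_ok_def by auto
  then have last: "2 * l i * (r i - 1) + 2 * l i = 2 * r i * l i"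
    by (cases "r i") (auto simp: algebra_simps)
  with r show "\<forall>j \<in> {1..r i}. 2 * l i \<le> (if j = r i then n i - 2 * l i * (r i - 1) else 2 * l i)"
    by auto
  have rest: "(\<Sum>j = 1..r i - 1. if j = r i then n i - 2 * l i * (r i - 1) else 2 * l i) = 2 * l i * (r i - 1)"
    by (subst sum.cong[where h = "\<lambda>_. 2 * l i"]) auto
  have "{1..r i} = insert (r i) {1..r i - 1}"
    using r(1) by auto
  then have "(\<Sum>j = 1..r i. if j = r i then n i - 2 * l i * (r i - 1) else 2 * l i)
      = n i - 2 * l i * (r i - 1) + (\<Sum>j = 1..r i - 1. if j = r i then n i - 2 * l i * (r i - 1) else 2 * l i)"
    using r(1) by simp
  with rest r last show "(\<Sum>j = 1..r i. if j = r i then n i - 2 * l i * (r i - 1) else 2 * l i) = n i"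
    by simp
qed

lemma Pcount_eq_Pformula:
  assumes "params_ok d n l r"
  shows "int (Pcount d n l r) = Pformula d (\<lambda>k. int (n k)) l r"
  unfolding Pcount_def
  by (rule count_valid_eq_Pformula[OF assms someI[where P = "gaps_ok d n l r", OF gaps_ok_exists[OF assms]]])

lemma params_ok_shift:
  assumes "params_ok d n l r" and "i \<in> {1..d}"
  shows "params_ok (i - 1) (\<lambda>k. n k - 2 * r k * l i) (\<lambda>k. l k - l i) r"
  unfolding params_ok_def
proof (intro conjI ballI allI impI)
  fix k assume "k \<in> {1..i - 1}"
  with assms have "l i < l k" "1 \<le> r k" "2 * r k * l k \<le> n k"
    unfolding params_ok_def by auto
  moreover from this have "2 * r k * l i < 2 * r k * l k"
    by simp
  ultimately show "1 \<le> l k - l i" "1 \<le> r k" "0 < n k - 2 * r k * l i"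
    "2 * r k * (l k - l i) \<le> n k - 2 * r k * l i"
    unfolding diff_mult_distrib2 by linarith+
next
  fix a b assume "1 \<le> a" "a < b" "b \<le> i - 1"
  with assms have "l b < l a" "l i < l b"
    unfolding params_ok_def by auto
  then show "l b - l i < l a - l i"
    by simp
qed

lemma Pcount_shift_eq_Pformula:
  assumes "params_ok d n l r" and "i \<in> {1..d}"
  shows "int (Pcount (i - 1) (\<lambda>k. n k - 2 * r k * l i) (\<lambda>k. l k - l i) r)
    = Pformula (i - 1) (\<lambda>k. int (n k) - 2 * int (r k) * int (l i)) (\<lambda>k. l k - l i) r"
  unfolding Pcount_eq_Pformula[OF params_ok_shift[OF assms]]
proof (rule Pformula_cong)
  fix k assume "k \<in> {1..i - 1}"
  with params_ok_shift[OF assms] have "0 < n k - 2 * r k * l i"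
    unfolding params_ok_def by blast
  then show "int (n k - 2 * r k * l i) = int (n k) - 2 * int (r k) * int (l i)"
    by (simp add: of_nat_diff)
qed

lemma Pcount_recursion:
  assumes "params_ok d n l r"
  shows "int (Pcount d n l r) = (\<Prod>i = 1..d. int (n i))
    - 4 * (\<Sum>i = 1..d. \<Sum>j = i + 1..d.
        int (r i) * int (r j) * int (l j) ^ 2
        * int (Pcount (i - 1) (\<lambda>k. n k - 2 * r k * l i) (\<lambda>k. l k - l i) r)
        * (\<Prod>k \<in> {i<..<j}. int (n k) - 2 * int (r k) * int (l k))
        * (\<Prod>k \<in> {j<..d}. int (n k)))"
proof -
  have inner: "(\<Sum>j = i + 1..d. int (r i) * int (r j) * int (l j) ^ 2
        * Pformula (i - 1) (\<lambda>k. int (n k) - 2 * int (r k) * int (l i)) (\<lambda>k. l k - l i) r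
        * (\<Prod>k \<in> {i<..<j}. int (n k) - 2 * int (r k) * int (l k)) * (\<Prod>k \<in> {j<..d}. int (n k)))
      = (\<Sum>j = i + 1..d. int (r i) * int (r j) * int (l j) ^ 2
        * int (Pcount (i - 1) (\<lambda>k. n k - 2 * r k * l i) (\<lambda>k. l k - l i) r)
        * (\<Prod>k \<in> {i<..<j}. int (n k) - 2 * int (r k) * int (l k)) * (\<Prod>k \<in> {j<..d}. int (n k)))"
    if "i \<in> {1..d}" for i
    unfolding Pcount_shift_eq_Pformula[OF assms that] ..
  show ?thesis
    unfolding Pcount_eq_Pformula[OF assms] by (subst Pformula.simps) (simp only: sum.cong[OF refl inner])
qed

lemma Pcount_0: "Pcount 0 n l r = 1"
  using Pcount_eq_Pformula[of 0 n l r] by (simp add: params_ok_def)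

lemma Pcount_polynomial:
  fixes d :: nat and l r :: "nat \<Rightarrow> nat"
  assumes "\<forall>i \<in> {1..d}. 1 \<le> l i" "\<forall>i j. 1 \<le> i \<longrightarrow> i < j \<longrightarrow> j \<le> d \<longrightarrow> l j < l i"
    "\<forall>i \<in> {1..d}. 1 \<le> r i"
  shows "\<exists>q :: int poly. lead_coeff q = 1 \<and> degree q = d \<and>
    (d = 1 \<longrightarrow> q = [: - int (l 1), 1 :]) \<and>
    (\<forall>N :: int.
       let nN = (\<lambda>i. N - int (l i) - 2 * (\<Sum>j \<in> {1..d} - {i}. int (r j) * int (min (l i) (l j))))
       in (\<forall>i \<in> {1..d}. 0 < nN i \<and> 2 * int (r i) * int (l i) \<le> nN i) \<longrightarrow>
          int (Pcount d (\<lambda>i. nat (nN i)) l r) = poly q N)"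
proof -
  define c where "c i = - int (l i) - 2 * (\<Sum>j \<in> {1..d} - {i}. int (r j) * int (min (l i) (l j)))" for i
  define q where "q = Pformula d (\<lambda>i. [:c i, 1:]) l r"
  have "degree q = d \<and> lead_coeff q = 1"
    unfolding q_def by (rule Pformula_monic) simp
  moreover have "q = [: - int (l 1), 1 :]" if "d = 1"
    unfolding q_def c_def that Pformula_1 by simp
  moreover have "int (Pcount d (\<lambda>i. nat (N - int (l i)
        - 2 * (\<Sum>j \<in> {1..d} - {i}. int (r j) * int (min (l i) (l j))))) l r) = poly q N"
    if "\<forall>i \<in> {1..d}. 0 < N - int (l i) - 2 * (\<Sum>j \<in> {1..d} - {i}. int (r j) * int (min (l i) (l j)))
      \<and> 2 * int (r i) * int (l i) \<le> N - int (l i) - 2 * (\<Sum>j \<in> {1..d} - {i}. int (r j) * int (min (l i) (l j)))"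
    for N
  proof -
    have shifted: "N - int (l i) - 2 * (\<Sum>j \<in> {1..d} - {i}. int (r j) * int (min (l i) (l j))) = N + c i" for i
      by (simp add: c_def)
    have "params_ok d (\<lambda>i. nat (N + c i)) l r"
      using assms that unfolding params_ok_def shifted by (auto simp: le_nat_iff)
    then have "int (Pcount d (\<lambda>i. nat (N + c i)) l r) = Pformula d (\<lambda>i. int (nat (N + c i))) l r"
      by (rule Pcount_eq_Pformula)
    also have "\<dots> = Pformula d (\<lambda>i. poly [:c i, 1:] N) l r"
    proof (rule Pformula_cong)
      fix k assume "k \<in> {1..d}"
      with that have "0 < N + c k"
        unfolding shifted by blast
      then show "int (nat (N + c k)) = poly [:c k, 1:] N"
        by simp
    qed
    finally show ?thesis
      unfolding shifted by (simp add: q_def poly_Pformula)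
  qed
  ultimately show ?thesis
    unfolding Let_def by blast
qed

theorem proposition5p5:
  fixes d :: nat and l r :: "nat \<Rightarrow> nat"
  assumes d_pos: "1 \<le> d"
    and l_pos: "\<forall>i \<in> {1..d}. 1 \<le> l i"
    and l_dec: "\<forall>i j. 1 \<le> i \<longrightarrow> i < j \<longrightarrow> j \<le> d \<longrightarrow> l j < l i"
    and r_pos: "\<forall>i \<in> {1..d}. 1 \<le> r i"
  shows
    "(\<forall>n :: nat \<Rightarrow> nat. params_ok d n l r \<longrightarrow>
        (\<forall>g g'. gaps_ok d n l r g \<longrightarrow> gaps_ok d n l r g' \<longrightarrow>
                count_valid d n l r g = count_valid d n l r g') \<and>
        (\<forall>g. gaps_ok d n l r g \<longrightarrow> count_valid d n l r g = Pcount d n l r) \<and>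
        (d = 1 \<longrightarrow> Pcount 1 n l r = n 1) \<and>
        int (Pcount d n l r) =
          (\<Prod>i = 1..d. int (n i))
          - 4 * (\<Sum>i = 1..d. \<Sum>j = i + 1..d.
                  int (r i) * int (r j) * int (l j) ^ 2
                  * int (Pcount (i - 1) (\<lambda>k. n k - 2 * r k * l i) (\<lambda>k. l k - l i) r)
                  * (\<Prod>k \<in> {i<..<j}. int (n k) - 2 * int (r k) * int (l k))
                  * (\<Prod>k \<in> {j<..d}. int (n k)))) \<and>
     (\<forall>n0 l0 r0 :: nat \<Rightarrow> nat. Pcount 0 n0 l0 r0 = 1) \<and>
     (\<exists>q :: int poly. lead_coeff q = 1 \<and> degree q = d \<and>
        (d = 1 \<longrightarrow> q = [: - int (l 1), 1 :]) \<and>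
        (\<forall>N :: int.
           let nN = (\<lambda>i. N - int (l i)
                       - 2 * (\<Sum>j \<in> {1..d} - {i}. int (r j) * int (min (l i) (l j))))
           in (\<forall>i \<in> {1..d}. 0 < nN i \<and> 2 * int (r i) * int (l i) \<le> nN i) \<longrightarrow>
              int (Pcount d (\<lambda>i. nat (nN i)) l r) = poly q N))"
proof -
  have count_eq: "count_valid d n l r g = Pcount d n l r" if "params_ok d n l r" "gaps_ok d n l r g" for n g
    using count_valid_eq_Pformula[OF that] Pcount_eq_Pformula[OF that(1)] by simp
  have Pcount_1: "Pcount 1 n l r = n 1" if "params_ok 1 n l r" for n
    using Pcount_eq_Pformula[OF that] unfolding Pformula_1 by simp
  show ?thesis
  proof (intro conjI allI impI Pcount_0 Pcount_polynomial[OF l_pos l_dec r_pos])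
    fix n g g' assume "params_ok d n l r" "gaps_ok d n l r g" "gaps_ok d n l r g'"
    then show "count_valid d n l r g = count_valid d n l r g'"
      by (simp add: count_eq)
  next
    fix n assume "params_ok d n l r" "d = 1"
    then show "Pcount 1 n l r = n 1"
      using Pcount_1 by simp
  qed (simp_all add: count_eq Pcount_recursion)
qed

end
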